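(* Let $T_{a_1\dots a_r}\neq0$ be a rank-$r$ tensor, $r\ge1$. Then $T\in\mathcal{DP}$ if and only if $T_{a_1\dots a_r}u_1^{a_1}\cdots u_r^{a_r}>0$ for every set $u_1,\dots,u_r$ of timelike future-pointing vectors.
   Context: Lorentzian metric of signature $(+,-,\dots,-)$ with time orientation; timelike: $v\cdot v>0$; causal: $v\ne0$, $v\cdot v\ge0$. $\mathcal{DP}$: tensors $T$ with $T_{a_1\dots a_r}u_1^{a_1}\cdots u_r^{a_r}\ge0$ for all causal future-pointing $u_1,\dots,u_r$. *)

theory Defs
  imports Complex_Main
begin

text \<open>Minkowski space of dimension 1 + CARD('n), in an orthonormal time-oriented
  frame: a vector is a function on the index type 'n option, where the index
  None is the time coordinate and Some i are the spatial coordinates.\<close>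

type_synonym 'n lvec = "'n option \<Rightarrow> real"

definition mdot :: "'n::finite lvec \<Rightarrow> 'n lvec \<Rightarrow> real" where
  "mdot u v = u None * v None - (\<Sum>i\<in>UNIV. u (Some i) * v (Some i))"

definition timelike :: "'n::finite lvec \<Rightarrow> bool" where
  "timelike v \<longleftrightarrow> mdot v v > 0"

definition causal :: "'n::finite lvec \<Rightarrow> bool" where
  "causal v \<longleftrightarrow> v \<noteq> (\<lambda>_. 0) \<and> mdot v v \<ge> 0"

definition future_pointing :: "'n::finite lvec \<Rightarrow> bool" where
  "future_pointing v \<longleftrightarrow> v None > 0"

text \<open>A rank-r (covariant) tensor is given by its components T [a_1,...,a_r]
  (only index lists of length r matter).  Full contraction with r vectors u_0..u_(r-1).\<close>

definition contract :: "nat \<Rightarrow> ('n::finite option list \<Rightarrow> real) \<Rightarrow> (nat \<Rightarrow> 'n lvec) \<Rightarrow> real" where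
  "contract r T u = (\<Sum>as\<in>{as. length as = r}. T as * (\<Prod>k<r. u k (as ! k)))"

definition tensor_nonzero :: "nat \<Rightarrow> ('n option list \<Rightarrow> real) \<Rightarrow> bool" where
  "tensor_nonzero r T \<longleftrightarrow> (\<exists>as. length as = r \<and> T as \<noteq> 0)"

definition DP :: "nat \<Rightarrow> ('n::finite option list \<Rightarrow> real) \<Rightarrow> bool" where
  "DP r T \<longleftrightarrow> (\<forall>u. (\<forall>k<r. causal (u k) \<and> future_pointing (u k)) \<longrightarrow> contract r T u \<ge> 0)"

end

theory Submission
  imports Defs
begin

text \<open>The contraction is multilinear. Causal future vectors are limits of the timelike future
  vectors u + e e0 (e0 = time_unit), which gives one direction. Conversely, if the contraction of
  a DP tensor vanishes at timelike future u_1, ..., u_r, then in each slot in turn it is a linear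
  functional that is nonnegative on the future causal cone and vanishes at an interior point,
  hence vanishes identically; so the contraction vanishes on all future causal tuples. Since every
  vector is a difference x = (x + c e0) - c e0 of timelike future vectors, it then vanishes
  everywhere, and contracting with basis vectors shows T = 0.\<close>

definition time_unit :: "'n lvec" where
  "time_unit i = (if i = None then 1 else 0)"

lemma timelike_imp_causal: "timelike v \<Longrightarrow> causal v"
  unfolding timelike_def causal_def by (auto simp: mdot_def)

lemma future_timelike_time_unit:
  "timelike (time_unit :: 'n::finite lvec)" "future_pointing (time_unit :: 'n::finite lvec)"
  by (auto simp: timelike_def future_pointing_def mdot_def time_unit_def)

lemma future_timelike_add_time_unit:
  assumes "causal u" "future_pointing u" "e > 0"
  shows "timelike (\<lambda>i. u i + e * time_unit i)" "future_pointing (\<lambda>i. u i + e * time_unit i)"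
proof -
  have "u None * u None < (u None + e) * (u None + e)"
    using assms by (intro mult_strict_mono) (auto simp: future_pointing_def)
  with assms show "timelike (\<lambda>i. u i + e * time_unit i)"
    by (simp add: timelike_def causal_def mdot_def time_unit_def)
  show "future_pointing (\<lambda>i. u i + e * time_unit i)"
    using assms by (simp add: future_pointing_def time_unit_def)
qed

lemma exists_future_timelike_shift:
  fixes x :: "'n::finite lvec"
  obtains c where "timelike (\<lambda>i. x i + c * time_unit i)" "future_pointing (\<lambda>i. x i + c * time_unit i)"
proof
  let ?S = "\<Sum>i\<in>UNIV. x (Some i) * x (Some i)"
  define c where "c = \<bar>x None\<bar> + ?S + 1"
  have S: "?S \<ge> 0" by (intro sum_nonneg) auto
  have t: "x None + c \<ge> ?S + 1" unfolding c_def by linarith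
  then have "(?S + 1) * (?S + 1) \<le> (x None + c) * (x None + c)"
    using S by (intro mult_mono) auto
  moreover have "?S < (?S + 1) * (?S + 1)"
    using S by (simp add: algebra_simps) (smt (verit) mult_nonneg_nonneg)
  ultimately show "timelike (\<lambda>i. x i + c * time_unit i)"
    by (simp add: timelike_def mdot_def time_unit_def)
  show "future_pointing (\<lambda>i. x i + c * time_unit i)"
    using t S by (simp add: future_pointing_def time_unit_def)
qed

lemma eventually_future_timelike_at_0:
  fixes p w :: "'n::finite lvec"
  assumes "timelike p" "future_pointing p"
  shows "eventually (\<lambda>e. timelike (\<lambda>i. p i + e * w i) \<and> future_pointing (\<lambda>i. p i + e * w i)) (at 0)"
proof -
  have "((\<lambda>e. mdot (\<lambda>i. p i + e * w i) (\<lambda>i. p i + e * w i)) \<longlongrightarrow> mdot p p) (at 0)"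
    unfolding mdot_def by (auto intro!: tendsto_eq_intros)
  moreover have "((\<lambda>e. p None + e * w None) \<longlongrightarrow> p None) (at 0)"
    by (auto intro!: tendsto_eq_intros)
  ultimately show ?thesis
    using assms unfolding timelike_def future_pointing_def
    by (intro eventually_conj order_tendstoD)
qed

lemma cone_functional_eq_0:
  fixes G :: "'n::finite lvec \<Rightarrow> real"
  assumes linear: "\<And>a b x y. G (\<lambda>i. a * x i + b * y i) = a * G x + b * G y"
    and nonneg: "\<And>x. causal x \<Longrightarrow> future_pointing x \<Longrightarrow> G x \<ge> 0"
    and "timelike p" "future_pointing p" "G p = 0"
  shows "G w = 0"
proof -
  obtain d :: real where "d > 0" and d: "\<And>e. e \<noteq> 0 \<Longrightarrow> \<bar>e\<bar> < d \<Longrightarrow>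
      timelike (\<lambda>i. p i + e * w i) \<and> future_pointing (\<lambda>i. p i + e * w i)"
    using eventually_future_timelike_at_0[OF assms(3,4), of w]
    unfolding eventually_at dist_real_def by auto
  have "e * G w \<ge> 0" if "e \<noteq> 0" "\<bar>e\<bar> < d" for e
  proof -
    have "G (\<lambda>i. 1 * p i + e * w i) \<ge> 0"
      using d[OF that] by (intro nonneg) (simp_all add: timelike_imp_causal)
    then show ?thesis using linear[of 1 p e w] \<open>G p = 0\<close> by simp
  qed
  from this[of "d / 2"] this[of "- d / 2"] \<open>d > 0\<close> show "G w = 0"
    by (simp add: zero_le_mult_iff mult_le_0_iff)
qed

lemma contract_cong:
  assumes "\<And>k. k < r \<Longrightarrow> u k = v k"
  shows "contract r T u = contract r T v"
  unfolding contract_def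
  by (intro sum.cong refl arg_cong2[where f="(*)"] prod.cong) (auto simp: assms)

lemma contract_fun_upd:
  assumes "k < r"
  shows "contract r T (u(k := w)) =
    (\<Sum>as | length as = r. T as * (w (as ! k) * (\<Prod>i\<in>{..<r} - {k}. u i (as ! i))))"
  unfolding contract_def
proof (intro sum.cong refl arg_cong2[where f="(*)"])
  fix as :: "'a option list"
  have "(\<Prod>i<r. (u(k := w)) i (as ! i)) = w (as ! k) * (\<Prod>i\<in>{..<r} - {k}. (u(k := w)) i (as ! i))"
    using assms by (subst prod.remove[of "{..<r}" k]) auto
  also have "(\<Prod>i\<in>{..<r} - {k}. (u(k := w)) i (as ! i)) = (\<Prod>i\<in>{..<r} - {k}. u i (as ! i))"
    by (rule prod.cong) auto
  finally show "(\<Prod>i<r. (u(k := w)) i (as ! i)) = w (as ! k) * (\<Prod>i\<in>{..<r} - {k}. u i (as ! i))" .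
qed

lemma contract_fun_upd_linear:
  assumes "k < r"
  shows "contract r T (u(k := (\<lambda>i. a * x i + b * y i))) =
    a * contract r T (u(k := x)) + b * contract r T (u(k := y))"
  using assms
  by (simp add: contract_fun_upd sum_distrib_left sum.distrib[symmetric] algebra_simps)

lemma contract_basis:
  fixes T :: "'n::finite option list \<Rightarrow> real"
  assumes "length as = r"
  shows "contract r T (\<lambda>k i. if i = as ! k then 1 else 0) = T as"
proof -
  have "(\<Prod>k<r. if bs ! k = as ! k then 1 else 0) = (if bs = as then 1 else (0::real))"
    if "length bs = r" for bs :: "'n option list"
    using that assms by (auto simp: list_eq_iff_nth_eq intro: prod_zero)
  then have "contract r T (\<lambda>k i. if i = as ! k then 1 else 0) =
      (\<Sum>bs | length bs = r. if bs = as then T bs else 0)"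
    unfolding contract_def by (intro sum.cong) auto
  also have "\<dots> = T as"
    using finite_lists_length_eq[of "UNIV :: 'n option set" r] assms by simp
  finally show ?thesis .
qed

lemma contract_eq_0_on_causal_if_DP:
  assumes DP: "DP r T"
    and u: "\<forall>k<r. timelike (u k) \<and> future_pointing (u k)" and "contract r T u = 0"
    and v: "\<forall>k<r. causal (v k) \<and> future_pointing (v k)"
  shows "contract r T v = 0"
proof -
  have "contract r T (\<lambda>k. if k < j then v k else u k) = 0" if "j \<le> r" for j
    using that
  proof (induction j)
    case 0
    then show ?case using \<open>contract r T u = 0\<close> by simp
  next
    case (Suc j)
    define w where "w = (\<lambda>k. if k < j then v k else u k)"
    define G where "G x = contract r T (w(j := x))" for x
    have "G (v j) = 0"
    proof (rule cone_functional_eq_0[where G = G])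
      show "G (\<lambda>i. a * x i + b * y i) = a * G x + b * G y" for a b x y
        unfolding G_def using Suc.prems by (simp add: contract_fun_upd_linear)
      show "G x \<ge> 0" if "causal x" "future_pointing x" for x
      proof -
        have "\<forall>k<r. causal ((w(j := x)) k) \<and> future_pointing ((w(j := x)) k)"
          using that u v by (auto simp: w_def timelike_imp_causal)
        then show ?thesis using DP unfolding DP_def G_def by blast
      qed
      show "timelike (u j)" "future_pointing (u j)"
        using u Suc.prems by auto
      have "w(j := u j) = w" by (auto simp: w_def)
      then show "G (u j) = 0" using Suc by (simp add: G_def w_def)
    qed
    moreover have "(\<lambda>k. if k < Suc j then v k else u k) = w(j := v j)"
      by (auto simp: w_def)
    ultimately show ?case by (simp add: G_def)
  qed
  moreover have "contract r T (\<lambda>k. if k < r then v k else u k) = contract r T v"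
    by (rule contract_cong) simp
  ultimately show ?thesis by simp
qed

lemma contract_eq_0_if_eq_0_on_spanning_set:
  assumes span: "\<And>x. \<exists>a b y z. y \<in> P \<and> z \<in> P \<and> x = (\<lambda>i. a * y i + b * z i)"
    and zero: "\<And>p. \<forall>k<r. p k \<in> P \<Longrightarrow> contract r T p = 0"
  shows "contract r T v = 0"
proof -
  have "contract r T (\<lambda>k. if k < j then v k else p k) = 0"
    if "j \<le> r" "\<forall>k<r. p k \<in> P" for j p
    using that
  proof (induction j arbitrary: p)
    case 0
    then show ?case using zero by simp
  next
    case (Suc j)
    obtain a b y z where "y \<in> P" "z \<in> P" and vj: "v j = (\<lambda>i. a * y i + b * z i)"
      using span by blast
    define w where "w = (\<lambda>k. if k < j then v k else p k)"
    have "w(j := x) = (\<lambda>k. if k < j then v k else (p(j := x)) k)" for x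
      by (auto simp: w_def)
    then have "contract r T (w(j := x)) = 0" if "x \<in> P" for x
      using Suc that by simp
    moreover have "(\<lambda>k. if k < Suc j then v k else p k) = w(j := v j)"
      by (auto simp: w_def)
    ultimately show ?case
      using \<open>y \<in> P\<close> \<open>z \<in> P\<close> Suc.prems by (simp add: vj contract_fun_upd_linear)
  qed
  moreover obtain y where "y \<in> P" using span by blast
  ultimately have "contract r T (\<lambda>k. if k < r then v k else y) = 0" by simp
  moreover have "contract r T (\<lambda>k. if k < r then v k else y) = contract r T v"
    by (rule contract_cong) simp
  ultimately show ?thesis by simp
qed

lemma future_timelike_span:
  fixes x :: "'n::finite lvec"
  shows "\<exists>a b y z. y \<in> {y. timelike y \<and> future_pointing y} \<and> z \<in> {z. timelike z \<and> future_pointing z}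
    \<and> x = (\<lambda>i. a * y i + b * z i)"
proof -
  obtain c where "timelike (\<lambda>i. x i + c * time_unit i)" "future_pointing (\<lambda>i. x i + c * time_unit i)"
    by (rule exists_future_timelike_shift)
  moreover have "x = (\<lambda>i. 1 * (x i + c * time_unit i) + (- c) * time_unit i)"
    by simp
  ultimately show ?thesis
    using future_timelike_time_unit by blast
qed

lemma contract_pos_on_timelike_if_DP:
  assumes "DP r T" and "tensor_nonzero r T"
    and u: "\<forall>k<r. timelike (u k) \<and> future_pointing (u k)"
  shows "contract r T u > 0"
proof (rule ccontr)
  have "\<forall>k<r. causal (u k) \<and> future_pointing (u k)"
    using u by (simp add: timelike_imp_causal)
  with \<open>DP r T\<close> have "contract r T u \<ge> 0"
    unfolding DP_def by blast
  moreover assume "\<not> contract r T u > 0"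
  ultimately have "contract r T u = 0" by simp
  have zero_on_timelike: "contract r T v = 0"
    if "\<forall>k<r. v k \<in> {y. timelike y \<and> future_pointing y}" for v
    using contract_eq_0_on_causal_if_DP[OF \<open>DP r T\<close> u \<open>contract r T u = 0\<close>] that
    by (simp add: timelike_imp_causal)
  have "T as = 0" if "length as = r" for as
  proof -
    have "contract r T (\<lambda>k i. if i = as ! k then 1 else 0) = 0"
      by (rule contract_eq_0_if_eq_0_on_spanning_set[OF future_timelike_span zero_on_timelike])
    then show ?thesis by (simp add: contract_basis[OF that])
  qed
  with \<open>tensor_nonzero r T\<close> show False
    unfolding tensor_nonzero_def by blast
qed

lemma DP_if_contract_nonneg_on_timelike:
  assumes nonneg: "\<And>u. \<forall>k<r. timelike (u k) \<and> future_pointing (u k) \<Longrightarrow> contract r T u \<ge> 0"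
  shows "DP r T"
  unfolding DP_def
proof (intro allI impI)
  fix u :: "nat \<Rightarrow> 'a lvec"
  assume u: "\<forall>k<r. causal (u k) \<and> future_pointing (u k)"
  define U where "U e = (\<lambda>k i. u k i + e * time_unit i)" for e :: real
  have "((\<lambda>e. contract r T (U e)) \<longlongrightarrow> contract r T (U 0)) (at_right 0)"
    unfolding contract_def U_def by (intro tendsto_intros)
  moreover have "eventually (\<lambda>e. contract r T (U e) \<ge> 0) (at_right 0)"
  proof (rule eventually_mono[OF eventually_at_right_less])
    fix e :: real
    assume "e > 0"
    then have "\<forall>k<r. timelike (U e k) \<and> future_pointing (U e k)"
      unfolding U_def using u future_timelike_add_time_unit by blast
    then show "contract r T (U e) \<ge> 0" by (rule nonneg)
  qed
  ultimately have "contract r T (U 0) \<ge> 0"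
    by (rule tendsto_lowerbound) simp
  then show "contract r T u \<ge> 0" by (simp add: U_def)
qed

theorem mainTheorem16:
  fixes T :: "'n::finite option list \<Rightarrow> real" and r :: nat
  assumes "r \<ge> 1" and "tensor_nonzero r T"
  shows "DP r T \<longleftrightarrow>
    (\<forall>u. (\<forall>k<r. timelike (u k) \<and> future_pointing (u k)) \<longrightarrow> contract r T u > 0)"
proof
  assume "DP r T"
  show "\<forall>u. (\<forall>k<r. timelike (u k) \<and> future_pointing (u k)) \<longrightarrow> contract r T u > 0"
  proof (intro allI impI)
    fix u :: "nat \<Rightarrow> 'n lvec"
    assume "\<forall>k<r. timelike (u k) \<and> future_pointing (u k)"
    with \<open>DP r T\<close> \<open>tensor_nonzero r T\<close> show "contract r T u > 0"
      by (rule contract_pos_on_timelike_if_DP)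
  qed
next
  assume pos: "\<forall>u. (\<forall>k<r. timelike (u k) \<and> future_pointing (u k)) \<longrightarrow> contract r T u > 0"
  show "DP r T"
  proof (rule DP_if_contract_nonneg_on_timelike)
    fix u :: "nat \<Rightarrow> 'n lvec"
    assume "\<forall>k<r. timelike (u k) \<and> future_pointing (u k)"
    with pos have "contract r T u > 0" by simp
    then show "contract r T u \<ge> 0" by simp
  qed
qed

end
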